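(* Let $\sigma,b$ and $x$ be as in the context. There exist $C\in\mathcal{C}$ and $\delta^*\in1/\mathcal{C}$ such that for all $\delta\le\delta^*$ and all $\xi\in\mathbb{R}^2$, \[ \frac1C|\xi|_{A_\delta(x)}\le|\xi|_{\bar A_\delta(x)}\le C|\xi|_{A_\delta(x)}\quad\text{and}\quad\frac1C|\xi|_{A_\delta(x)}\le|\xi|_{A_\delta(\hat x)}\le C|\xi|_{A_\delta(x)}, \] where $\hat x=x+\delta b(x)$.
   Context: $\sigma,b:\mathbb{R}^2\to\mathbb{R}^2$ are $C^3$; $\partial_gf=\sum_ig^i\partial_{x_i}f$, $[f,g]=\partial_gf-\partial_fg$. $A_\delta(y)$ is the matrix with columns $\delta^{1/2}\sigma(y),\delta^{3/2}[b,\sigma](y)$; $\bar A_\delta(x)$ has columns $\delta^{1/2}(\sigma(x)+\delta\partial_b\sigma(x))$, $\delta^{3/2}[b,\sigma](x)$; for an invertible $2\times2$ matrix $M$, $|\xi|_M=|M^{-1}\xi|$. $\lambda(y)$ is the smallest eigenvalue of $A(y)A(y)^T$ where $A(y)$ has columns $\sigma(y),[b,\sigma](y)$; $n(y)=\sum_{k=0}^3\sum_{|\alpha|=k}(|\partial^\alpha b(y)|+|\partial^\alpha\sigma(y)|)$. Local hypotheses: $\lambda(y)\ge\Lambda\in(0,1]$ and $n(y)\le N$ (with $N\ge1$) for $|y-x|<1$; there is a differentiable $\kappa_\sigma$ with $\partial_\sigma\sigma=\kappa_\sigma\sigma$, $|\kappa_\sigma|,|\nabla\kappa_\sigma|\le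 n$. $\mathcal{C}=\{K(N/\Lambda)^q:K,q\ge1\text{ universal}\}$, $1/\mathcal{C}=\{c:1/c\in\mathcal{C}\}$. *)

theory Defs
  imports "HOL-Analysis.Analysis"
begin

type_synonym R2 = "real ^ 2"

definition pd :: "2 \<Rightarrow> (R2 \<Rightarrow> 'b::real_normed_vector) \<Rightarrow> R2 \<Rightarrow> 'b" where
  "pd i f = (\<lambda>y. frechet_derivative f (at y) (axis i 1))"

fun dlist :: "2 list \<Rightarrow> (R2 \<Rightarrow> 'b::real_normed_vector) \<Rightarrow> R2 \<Rightarrow> 'b" where
  "dlist [] f = f"
| "dlist (i # is) f = pd i (dlist is f)"

definition C3 :: "(R2 \<Rightarrow> 'b::real_normed_vector) \<Rightarrow> bool" where
  "C3 f \<longleftrightarrow> (\<forall>is. length is < 3 \<longrightarrow> (\<forall>y. dlist is f differentiable (at y)))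
           \<and> (\<forall>is. length is \<le> 3 \<longrightarrow> continuous_on UNIV (dlist is f))"

definition dalpha :: "nat \<times> nat \<Rightarrow> (R2 \<Rightarrow> 'b::real_normed_vector) \<Rightarrow> R2 \<Rightarrow> 'b" where
  "dalpha \<alpha> f = dlist (replicate (fst \<alpha>) 1 @ replicate (snd \<alpha>) 2) f"

definition lie :: "(R2 \<Rightarrow> R2) \<Rightarrow> (R2 \<Rightarrow> R2) \<Rightarrow> R2 \<Rightarrow> R2" where
  "lie g f = (\<lambda>y. \<Sum>i\<in>UNIV. (g y $ i) *\<^sub>R pd i f y)"

definition bracket :: "(R2 \<Rightarrow> R2) \<Rightarrow> (R2 \<Rightarrow> R2) \<Rightarrow> R2 \<Rightarrow> R2" where
  "bracket f g = (\<lambda>y. lie g f y - lie f g y)"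

definition cols2 :: "R2 \<Rightarrow> R2 \<Rightarrow> real ^ 2 ^ 2" where
  "cols2 c1 c2 = (\<chi> i j. if j = 1 then c1 $ i else c2 $ i)"

definition Amat :: "(R2 \<Rightarrow> R2) \<Rightarrow> (R2 \<Rightarrow> R2) \<Rightarrow> R2 \<Rightarrow> real ^ 2 ^ 2" where
  "Amat \<sigma> b y = cols2 (\<sigma> y) (bracket b \<sigma> y)"

definition Adelta :: "(R2 \<Rightarrow> R2) \<Rightarrow> (R2 \<Rightarrow> R2) \<Rightarrow> real \<Rightarrow> R2 \<Rightarrow> real ^ 2 ^ 2" where
  "Adelta \<sigma> b \<delta> y = cols2 (\<delta> powr (1/2) *\<^sub>R \<sigma> y) (\<delta> powr (3/2) *\<^sub>R bracket b \<sigma> y)"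

definition Abar :: "(R2 \<Rightarrow> R2) \<Rightarrow> (R2 \<Rightarrow> R2) \<Rightarrow> real \<Rightarrow> R2 \<Rightarrow> real ^ 2 ^ 2" where
  "Abar \<sigma> b \<delta> x = cols2 (\<delta> powr (1/2) *\<^sub>R (\<sigma> x + \<delta> *\<^sub>R lie b \<sigma> x))
                          (\<delta> powr (3/2) *\<^sub>R bracket b \<sigma> x)"

definition mnorm :: "real ^ 2 ^ 2 \<Rightarrow> R2 \<Rightarrow> real" where
  "mnorm M \<xi> = norm (matrix_inv M *v \<xi>)"

definition lam :: "(R2 \<Rightarrow> R2) \<Rightarrow> (R2 \<Rightarrow> R2) \<Rightarrow> R2 \<Rightarrow> real" where
  "lam \<sigma> b y = Min {t. \<exists>v. v \<noteq> 0 \<and> (Amat \<sigma> b y ** transpose (Amat \<sigma> b y)) *v v = t *\<^sub>R v}"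

definition nfun :: "(R2 \<Rightarrow> R2) \<Rightarrow> (R2 \<Rightarrow> R2) \<Rightarrow> R2 \<Rightarrow> real" where
  "nfun \<sigma> b y = (\<Sum>k\<le>3. \<Sum>\<alpha>\<in>{\<alpha>::nat\<times>nat. fst \<alpha> + snd \<alpha> = k}.
                    norm (dalpha \<alpha> b y) + norm (dalpha \<alpha> \<sigma> y))"

definition grad :: "(R2 \<Rightarrow> real) \<Rightarrow> R2 \<Rightarrow> R2" where
  "grad f y = (\<chi> i. pd i f y)"

end

theory Submission
  imports Defs "HOL-Library.Quadratic_Discriminant"
begin

(*
  Write C(y) for the matrix with columns sigma(y) and [b,sigma](y), so that
  A_delta(y) = sqrt delta * C(y) * diag(1, delta).  If C' is another such matrix with
  C' - C = O(delta) and |det C| is bounded below, then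
  A^{-1} A' = diag(1, 1/delta) C^{-1} C' diag(1, delta) has all entries bounded by a power
  of N/Lambda: the only entry carrying the factor 1/delta involves det(sigma, sigma'), which
  is O(delta).  Hence |.|_A and |.|_A' are comparable.  The lower bound |det C(x)| >= Lambda
  holds because lambda_min^2 <= lambda_min lambda_max = det(C C^T) = (det C)^2.
  Both comparisons are instances: for A-bar only the first column moves, by delta d_b sigma;
  for x-hat = x + delta b(x), the fields sigma and [b,sigma] are Lipschitz near x with
  constants polynomial in N, and |x-hat - x| <= delta N.
*)

definition det2 :: "R2 \<Rightarrow> R2 \<Rightarrow> real" where
  "det2 a b = a$1 * b$2 - a$2 * b$1"

lemma det_cols2: "det (cols2 a b) = det2 a b"
  by (simp add: det_2 cols2_def det2_def)

lemma cols2_mult_vec: "cols2 a b *v v = v$1 *\<^sub>R a + v$2 *\<^sub>R b"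
  by (simp add: vec_eq_iff cols2_def matrix_vector_mult_def sum_2 forall_2 mult.commute)

lemma matrix_mult_cols2: "A ** cols2 a b = cols2 (A *v a) (A *v b)"
  by (simp add: vec_eq_iff forall_2 cols2_def matrix_matrix_mult_def matrix_vector_mult_def)

lemma abs_det2_le: "\<bar>det2 a b\<bar> \<le> 2 * norm a * norm b"
proof -
  have "\<bar>a$i * b$j\<bar> \<le> norm a * norm b" for i j
    unfolding abs_mult by (intro mult_mono component_le_norm_cart) auto
  from this[of 1 2] this[of 2 1] show ?thesis
    unfolding det2_def by linarith
qed

lemma abs_det2_le_mult:
  assumes "norm a \<le> K" "norm b \<le> K'"
  shows "\<bar>det2 a b\<bar> \<le> 2 * K * K'"
proof -
  have "norm a * norm b \<le> K * K'"
    using assms by (intro mult_mono) (auto intro: order_trans[OF norm_ge_zero])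
  then show ?thesis
    using abs_det2_le[of a b] by linarith
qed

lemma norm_cols2_mult_vec_le:
  "norm (cols2 a b *v v) \<le> (\<bar>a$1\<bar> + \<bar>a$2\<bar> + \<bar>b$1\<bar> + \<bar>b$2\<bar>) * norm v"
proof -
  have l1: "norm (w::R2) \<le> \<bar>w$1\<bar> + \<bar>w$2\<bar>" for w
    using norm_le_l1_cart[of w] by (simp add: sum_2)
  have "norm (cols2 a b *v v) \<le> \<bar>v$1\<bar> * norm a + \<bar>v$2\<bar> * norm b"
    unfolding cols2_mult_vec by (metis norm_scaleR norm_triangle_ineq)
  also have "\<dots> \<le> norm v * (\<bar>a$1\<bar> + \<bar>a$2\<bar>) + norm v * (\<bar>b$1\<bar> + \<bar>b$2\<bar>)"
    by (intro add_mono mult_mono component_le_norm_cart l1) auto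
  finally show ?thesis
    by (simp add: algebra_simps)
qed

lemma matrix_mul_matrix_inv:
  fixes A :: "'a::semiring_1^'n^'n"
  assumes "invertible A"
  shows "A ** matrix_inv A = mat 1" "matrix_inv A ** A = mat 1"
  using someI_ex[OF assms[unfolded invertible_def]] unfolding matrix_inv_def by auto

lemma mnorm_le_of_factor:
  assumes "invertible M" "invertible P" "M ** Q = P" "\<And>v. norm (Q *v v) \<le> B * norm v"
  shows "mnorm M \<xi> \<le> B * mnorm P \<xi>"
proof -
  have "matrix_inv M *v \<xi> = matrix_inv M *v (P *v (matrix_inv P *v \<xi>))"
    by (simp add: matrix_vector_mul_assoc matrix_mul_matrix_inv assms)
  also have "\<dots> = Q *v (matrix_inv P *v \<xi>)"
    by (simp add: matrix_vector_mul_assoc matrix_mul_matrix_inv assms(1) assms(3)[symmetric]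
        matrix_mul_assoc)
  finally show ?thesis
    unfolding mnorm_def using assms(4) by simp
qed

lemma eigenvalue_iff_det_eq_0:
  fixes A :: "real^'n^'n"
  shows "(\<exists>v. v \<noteq> 0 \<and> A *v v = t *\<^sub>R v) \<longleftrightarrow> det (A - t *\<^sub>R mat 1) = 0"
proof -
  define B where "B = A - t *\<^sub>R mat 1"
  have "B *v v = A *v v - t *\<^sub>R v" for v
    unfolding B_def
    by (metis matrix_scaleR_vector_ac matrix_vector_mul_lid matrix_vector_mult_diff_rdistrib)
  then have "(\<exists>v. v \<noteq> 0 \<and> A *v v = t *\<^sub>R v) \<longleftrightarrow> \<not> inj ((*v) B)"
    by (simp add: vec.inj_iff_eq_0) blast
  also have "\<dots> \<longleftrightarrow> det B = 0"
    by (metis invertible_det_nz invertible_left_inverse matrix_left_invertible_injective)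
  finally show ?thesis
    unfolding B_def .
qed

lemma symmetric2_eigenvalues:
  fixes S :: "real^2^2"
  assumes "S$2$1 = S$1$2"
  obtains t1 t2 where "{t. \<exists>v. v \<noteq> 0 \<and> S *v v = t *\<^sub>R v} = {t1, t2}" "t1 * t2 = det S"
proof -
  define tr where "tr = S$1$1 + S$2$2"
  define d where "d = discrim 1 (- tr) (det S)"
  have d_eq: "d = (S$1$1 - S$2$2)^2 + 4 * (S$1$2)^2"
    unfolding d_def discrim_def tr_def det_2 assms by (simp add: power2_eq_square algebra_simps)
  have char: "det (S - t *\<^sub>R mat 1) = 1 * t^2 + (- tr) * t + det S" for t
    unfolding det_2 tr_def by (simp add: mat_def power2_eq_square algebra_simps)
  define t1 where "t1 = (tr + sqrt d) / 2"
  define t2 where "t2 = (tr - sqrt d) / 2"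
  have "det (S - t *\<^sub>R mat 1) = 0 \<longleftrightarrow> t = t1 \<or> t = t2" for t
    using discriminant_iff[of 1 t "- tr" "det S"] d_eq
    unfolding char d_def[symmetric] t1_def t2_def by simp
  then have "{t. \<exists>v. v \<noteq> 0 \<and> S *v v = t *\<^sub>R v} = {t1, t2}"
    unfolding eigenvalue_iff_det_eq_0 by blast
  moreover have "t1 * t2 = det S"
  proof -
    have "t1 * t2 = (tr^2 - (sqrt d)^2) / 4"
      unfolding t1_def t2_def by (simp add: power2_eq_square algebra_simps)
    then show ?thesis
      using d_eq unfolding d_def discrim_def by simp
  qed
  ultimately show ?thesis
    using that by blast
qed

lemma le_abs_det_of_le_min_eigenvalue:
  fixes M :: "real^2^2"
  assumes "0 < L" "L \<le> Min {t. \<exists>v. v \<noteq> 0 \<and> (M ** transpose M) *v v = t *\<^sub>R v}"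
  shows "L \<le> \<bar>det M\<bar>"
proof -
  have "(M ** transpose M)$2$1 = (M ** transpose M)$1$2"
    by (simp add: matrix_matrix_mult_def transpose_def sum_2 mult.commute)
  then obtain t1 t2 where
    eig: "{t. \<exists>v. v \<noteq> 0 \<and> (M ** transpose M) *v v = t *\<^sub>R v} = {t1, t2}"
    and prod: "t1 * t2 = det (M ** transpose M)"
    by (rule symmetric2_eigenvalues)
  have "L \<le> t1" "L \<le> t2"
    using assms(2) unfolding eig by auto
  then have "L^2 \<le> t1 * t2"
    using assms(1) unfolding power2_eq_square by (intro mult_mono) auto
  also have "\<dots> = \<bar>det M\<bar>^2"
    unfolding prod det_mul det_transpose by (simp add: power2_eq_square)
  finally show ?thesis
    using assms(1) by (meson abs_ge_zero power2_le_imp_le)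
qed

definition dilated_frame :: "real \<Rightarrow> R2 \<Rightarrow> R2 \<Rightarrow> real^2^2" where
  "dilated_frame \<delta> s c = cols2 (sqrt \<delta> *\<^sub>R s) ((\<delta> * sqrt \<delta>) *\<^sub>R c)"

lemma invertible_dilated_frame:
  "0 < \<delta> \<Longrightarrow> det2 s c \<noteq> 0 \<Longrightarrow> invertible (dilated_frame \<delta> s c)"
  unfolding invertible_det_nz dilated_frame_def det_cols2 by (simp add: det2_def algebra_simps)

lemma cols2_mult_vec_cramer:
  assumes "det2 s c \<noteq> 0"
  shows "cols2 s c *v vector [det2 v c / det2 s c, det2 s v / det2 s c] = v"
proof -
  have "det2 v c *\<^sub>R s + det2 s v *\<^sub>R c = det2 s c *\<^sub>R v"
    by (simp add: vec_eq_iff forall_2 det2_def algebra_simps)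
  then have "(1 / det2 s c) *\<^sub>R (det2 v c *\<^sub>R s + det2 s v *\<^sub>R c) = v"
    using assms by simp
  then show ?thesis
    unfolding cols2_mult_vec by (simp add: scaleR_add_right)
qed

lemma dilated_frame_mult_vec:
  "dilated_frame \<delta> s c *v w = sqrt \<delta> *\<^sub>R (cols2 s c *v vector [w$1, \<delta> * w$2])"
  unfolding dilated_frame_def cols2_mult_vec by (simp add: algebra_simps)

lemma dilated_frame_mult_vec_first:
  assumes "det2 s c \<noteq> 0" "0 < \<delta>"
  shows "dilated_frame \<delta> s c *v vector [det2 s' c / det2 s c, det2 s s' / (\<delta> * det2 s c)]
           = sqrt \<delta> *\<^sub>R s'"
  using cols2_mult_vec_cramer[OF assms(1), of s'] assms(2)
  unfolding dilated_frame_mult_vec by simp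

lemma dilated_frame_mult_vec_second:
  assumes "det2 s c \<noteq> 0" "0 < \<delta>"
  shows "dilated_frame \<delta> s c *v vector [\<delta> * det2 c' c / det2 s c, det2 s c' / det2 s c]
           = (\<delta> * sqrt \<delta>) *\<^sub>R c'"
proof -
  have "vector [\<delta> * det2 c' c / det2 s c, \<delta> * (det2 s c' / det2 s c)]
        = \<delta> *\<^sub>R (vector [det2 c' c / det2 s c, det2 s c' / det2 s c] :: R2)"
    by (simp add: vec_eq_iff forall_2)
  then show ?thesis
    using cols2_mult_vec_cramer[OF assms(1), of c']
    unfolding dilated_frame_mult_vec by (simp add: matrix_vector_mult_scaleR)
qed

lemma mnorm_dilated_frame_le:
  fixes s c s' c' :: R2
  assumes det: "L \<le> \<bar>det2 s c\<bar>" "0 < L" "det2 s' c' \<noteq> 0"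
    and bounded: "norm s \<le> K" "norm c \<le> K" "norm s' \<le> K" "norm c' \<le> K"
    and close: "norm (s' - s) \<le> E * \<delta>"
    and \<delta>: "0 < \<delta>" "\<delta> \<le> 1"
  shows "mnorm (dilated_frame \<delta> s c) \<xi>
           \<le> ((6 * K^2 + 2 * K * E) / L) * mnorm (dilated_frame \<delta> s' c') \<xi>"
proof -
  define D where "D = det2 s c"
  have D: "D \<noteq> 0" "L \<le> \<bar>D\<bar>"
    using det unfolding D_def by auto
  have div_le: "\<bar>x / D\<bar> \<le> B / L" if "\<bar>x\<bar> \<le> B" for x B
  proof -
    have "\<bar>x\<bar> / \<bar>D\<bar> \<le> B / L"
      by (rule frac_le) (use that D det(2) in auto)
    then show ?thesis
      by (simp add: abs_divide)
  qed
  define q1 :: R2 where "q1 = vector [det2 s' c / D, det2 s s' / (\<delta> * D)]"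
  define q2 :: R2 where "q2 = vector [\<delta> * det2 c' c / D, det2 s c' / D]"
  have factor: "dilated_frame \<delta> s c ** cols2 q1 q2 = dilated_frame \<delta> s' c'"
    using dilated_frame_mult_vec_first[OF D(1)[unfolded D_def] \<delta>(1), of s']
      dilated_frame_mult_vec_second[OF D(1)[unfolded D_def] \<delta>(1), of c']
    unfolding matrix_mult_cols2 q1_def q2_def D_def by (simp add: dilated_frame_def)
  have "\<bar>q1$1\<bar> \<le> 2 * K^2 / L"
    unfolding q1_def using div_le[OF abs_det2_le_mult[OF bounded(3,2)]]
    by (simp add: power2_eq_square)
  moreover have "\<bar>q1$2\<bar> \<le> 2 * K * E / L"
  proof -
    have "\<bar>det2 s s'\<bar> \<le> 2 * K * (E * \<delta>)"
      using abs_det2_le_mult[OF bounded(1) close] by (simp add: det2_def algebra_simps)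
    then have "\<bar>det2 s s' / \<delta>\<bar> \<le> 2 * K * E"
      using \<delta>(1) by (simp add: abs_divide field_simps)
    from div_le[OF this] show ?thesis
      unfolding q1_def by (simp add: field_simps)
  qed
  moreover have "\<bar>q2$1\<bar> \<le> 2 * K^2 / L"
  proof -
    have "\<bar>\<delta> * det2 c' c\<bar> \<le> 2 * K * K"
      using abs_det2_le_mult[OF bounded(4,2)] \<delta> unfolding abs_mult
      by (smt (verit) abs_ge_zero mult_left_le_one_le)
    from div_le[OF this] show ?thesis
      unfolding q2_def by (simp add: power2_eq_square)
  qed
  moreover have "\<bar>q2$2\<bar> \<le> 2 * K^2 / L"
    unfolding q2_def using div_le[OF abs_det2_le_mult[OF bounded(1,4)]]
    by (simp add: power2_eq_square)
  ultimately have "\<bar>q1$1\<bar> + \<bar>q1$2\<bar> + \<bar>q2$1\<bar> + \<bar>q2$2\<bar> \<le> (6 * K^2 + 2 * K * E) / L"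
    by (simp add: add_divide_distrib)
  then have "norm (cols2 q1 q2 *v v) \<le> ((6 * K^2 + 2 * K * E) / L) * norm v" for v
    by (meson mult_right_mono norm_cols2_mult_vec_le norm_ge_zero order_trans)
  moreover have "invertible (dilated_frame \<delta> s c)" "invertible (dilated_frame \<delta> s' c')"
    using D(1) det(3) \<delta>(1) unfolding D_def by (auto intro: invertible_dilated_frame)
  ultimately show ?thesis
    using factor mnorm_le_of_factor by blast
qed

lemma mnorm_dilated_frame_comparable:
  fixes s c s' c' :: R2
  assumes NL: "1 \<le> N" "0 < \<Lambda>" "\<Lambda> \<le> 1"
    and det: "\<Lambda> \<le> \<bar>det2 s c\<bar>"
    and bounded: "norm s \<le> 4*N^2" "norm c \<le> 4*N^2" "norm s' \<le> 4*N^2" "norm c' \<le> 4*N^2"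
    and close: "norm (s' - s) \<le> 16*N^3 * \<delta>" "norm (c' - c) \<le> 16*N^3 * \<delta>"
    and \<delta>: "0 < \<delta>" "\<delta> \<le> \<Lambda> / (512 * N^5)"
  shows "mnorm (dilated_frame \<delta> s c) \<xi> \<le> 448 * (N/\<Lambda>)^5 * mnorm (dilated_frame \<delta> s' c') \<xi>"
    and "mnorm (dilated_frame \<delta> s' c') \<xi> \<le> 448 * (N/\<Lambda>)^5 * mnorm (dilated_frame \<delta> s c) \<xi>"
proof -
  have N5: "1 \<le> N^5"
    using NL by simp
  have "\<Lambda> \<le> 512 * N^5"
    using N5 NL by linarith
  then have "\<Lambda> / (512 * N^5) \<le> 1"
    using NL by (subst pos_divide_le_eq) auto
  then have \<delta>1: "\<delta> \<le> 1"
    using \<delta> by linarith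
  have small: "256 * N^5 * \<delta> \<le> \<Lambda> / 2"
    using \<delta>(2) NL N5 by (simp add: le_divide_eq algebra_simps)
  have "det2 s' c' - det2 s c = det2 (s' - s) c' + det2 s (c' - c)"
    by (simp add: det2_def algebra_simps)
  then have "\<bar>det2 s' c' - det2 s c\<bar> \<le> 2 * (16*N^3*\<delta>) * (4*N^2) + 2 * (4*N^2) * (16*N^3*\<delta>)"
    using abs_det2_le_mult[OF close(1) bounded(4)] abs_det2_le_mult[OF bounded(1) close(2)]
    by linarith
  also have "\<dots> = 256 * N^5 * \<delta>"
    by (simp add: algebra_simps power_add[symmetric] eval_nat_numeral)
  finally have det': "\<Lambda> / 2 \<le> \<bar>det2 s' c'\<bar>"
    using det small by linarith
  have "(6 * (4*N^2)^2 + 2 * (4*N^2) * (16*N^3)) / (\<Lambda>/2) = (192 * N^4 + 256 * N^5) / \<Lambda>"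
    using NL by (simp add: field_simps eval_nat_numeral)
  also have "\<dots> \<le> 448 * N^5 / \<Lambda>"
    using NL power_increasing[of 4 5 N] by (intro divide_right_mono) auto
  also have "\<dots> \<le> 448 * N^5 / \<Lambda>^5"
    using NL power_decreasing[of 1 5 \<Lambda>] by (intro divide_left_mono) auto
  finally have const: "(6 * (4*N^2)^2 + 2 * (4*N^2) * (16*N^3)) / (\<Lambda>/2) \<le> 448 * (N/\<Lambda>)^5"
    by (simp add: power_divide)
  have det_half: "\<Lambda> / 2 \<le> \<bar>det2 s c\<bar>" "det2 s c \<noteq> 0" "det2 s' c' \<noteq> 0"
    using det det' NL by auto
  have "mnorm (dilated_frame \<delta> s c) \<xi>
          \<le> ((6 * (4*N^2)^2 + 2 * (4*N^2) * (16*N^3)) / (\<Lambda>/2)) * mnorm (dilated_frame \<delta> s' c') \<xi>"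
    by (rule mnorm_dilated_frame_le[OF det_half(1) _ det_half(3) bounded close(1) \<delta>(1) \<delta>1])
       (use NL in simp)
  also have "\<dots> \<le> 448 * (N/\<Lambda>)^5 * mnorm (dilated_frame \<delta> s' c') \<xi>"
    by (intro mult_right_mono const) (simp add: mnorm_def)
  finally show "mnorm (dilated_frame \<delta> s c) \<xi> \<le> 448 * (N/\<Lambda>)^5 * mnorm (dilated_frame \<delta> s' c') \<xi>" .
  have close': "norm (s - s') \<le> 16*N^3 * \<delta>"
    using close(1) by (simp add: norm_minus_commute)
  have "mnorm (dilated_frame \<delta> s' c') \<xi>
          \<le> ((6 * (4*N^2)^2 + 2 * (4*N^2) * (16*N^3)) / (\<Lambda>/2)) * mnorm (dilated_frame \<delta> s c) \<xi>"
    by (rule mnorm_dilated_frame_le[OF det' _ det_half(2) bounded(3,4,1,2) close' \<delta>(1) \<delta>1])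
       (use NL in simp)
  also have "\<dots> \<le> 448 * (N/\<Lambda>)^5 * mnorm (dilated_frame \<delta> s c) \<xi>"
    by (intro mult_right_mono const) (simp add: mnorm_def)
  finally show "mnorm (dilated_frame \<delta> s' c') \<xi> \<le> 448 * (N/\<Lambda>)^5 * mnorm (dilated_frame \<delta> s c) \<xi>" .
qed

lemma frechet_derivative_axis:
  assumes "f differentiable (at y)"
  shows "frechet_derivative f (at y) (h *\<^sub>R axis i 1) = h *\<^sub>R pd i f y"
  using linear_frechet_derivative[OF assms] unfolding pd_def by (simp add: linear_scale)

lemma frechet_derivative_eq_pd:
  assumes "f differentiable (at y)"
  shows "frechet_derivative f (at y) v = v$1 *\<^sub>R pd 1 f y + v$2 *\<^sub>R pd 2 f y"
proof -
  have "v = v$1 *\<^sub>R axis 1 1 + v$2 *\<^sub>R axis 2 (1::real)"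
    by (simp add: vec_eq_iff forall_2 axis_def)
  then have "frechet_derivative f (at y) v
      = frechet_derivative f (at y) (v$1 *\<^sub>R axis 1 1 + v$2 *\<^sub>R axis 2 1)"
    by simp
  also have "\<dots> = v$1 *\<^sub>R pd 1 f y + v$2 *\<^sub>R pd 2 f y"
    using linear_frechet_derivative[OF assms] frechet_derivative_axis[OF assms]
    by (simp add: linear_add)
  finally show ?thesis .
qed

lemma norm_cart2_combination_le:
  assumes "norm a \<le> M" "norm b \<le> M"
  shows "norm (v$1 *\<^sub>R a + v$2 *\<^sub>R (b::'a::real_normed_vector)) \<le> 2 * M * norm (v::R2)"
proof -
  have "norm (v$1 *\<^sub>R a + v$2 *\<^sub>R b) \<le> \<bar>v$1\<bar> * norm a + \<bar>v$2\<bar> * norm b"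
    by (metis norm_scaleR norm_triangle_ineq)
  also have "\<dots> \<le> norm v * M + norm v * M"
    by (intro add_mono mult_mono component_le_norm_cart assms) auto
  finally show ?thesis
    by simp
qed

lemma norm_diff_le_of_directional_derivative_le:
  fixes g :: "'a::real_normed_vector \<Rightarrow> 'b::real_normed_vector"
  assumes S: "convex S" "y \<in> S" "z \<in> S"
    and deriv: "\<And>w. w \<in> S \<Longrightarrow> (g has_derivative g' w) (at w)"
    and bound: "\<And>w. w \<in> S \<Longrightarrow> norm (g' w (z - y)) \<le> B"
  shows "norm (g z - g y) \<le> B"
proof -
  define p where "p t = y + t *\<^sub>R (z - y)" for t :: real
  have p_in: "p t \<in> S" if "t \<in> {0..1}" for t
  proof -
    have "p t = (1 - t) *\<^sub>R y + t *\<^sub>R z"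
      unfolding p_def by (simp add: algebra_simps)
    then show ?thesis
      using S that convexD_alt by fastforce
  qed
  have p_deriv: "(p has_derivative (\<lambda>u. u *\<^sub>R (z - y))) (at t within {0..1})" for t
    unfolding p_def by (auto intro!: derivative_eq_intros)
  have "((\<lambda>t. g (p t)) has_derivative (\<lambda>u. g' (p t) (u *\<^sub>R (z - y)))) (at t within {0..1})"
    if "t \<in> {0..1}" for t
    by (rule has_derivative_in_compose[OF p_deriv])
       (rule has_derivative_at_withinI[OF deriv[OF p_in[OF that]]])
  moreover have "onorm (\<lambda>u. g' (p t) (u *\<^sub>R (z - y))) \<le> B" if "t \<in> {0..1}" for t
  proof (rule onorm_le)
    fix u :: real
    have "linear (g' (p t))"
      using deriv[OF p_in[OF that]] has_derivative_linear by blast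
    then have "norm (g' (p t) (u *\<^sub>R (z - y))) = \<bar>u\<bar> * norm (g' (p t) (z - y))"
      by (simp add: linear_scale)
    also have "\<dots> \<le> \<bar>u\<bar> * B"
      using bound[OF p_in[OF that]] by (simp add: mult_left_mono)
    finally show "norm (g' (p t) (u *\<^sub>R (z - y))) \<le> B * norm u"
      by (simp add: mult.commute)
  qed
  ultimately have "norm (g (p 1) - g (p 0)) \<le> B * norm (1 - 0::real)"
    by (intro differentiable_bound[of "{0..1}"]) auto
  then show ?thesis
    unfolding p_def by simp
qed

lemma norm_diff_le_of_pd_bound:
  fixes g :: "R2 \<Rightarrow> R2"
  assumes S: "convex S" "y \<in> S" "z \<in> S"
    and diff: "\<And>w. w \<in> S \<Longrightarrow> g differentiable (at w)"
    and bound: "\<And>w. w \<in> S \<Longrightarrow> norm (pd 1 g w) \<le> M" "\<And>w. w \<in> S \<Longrightarrow> norm (pd 2 g w) \<le> M"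
  shows "norm (g z - g y) \<le> 2 * M * norm (z - y)"
proof (rule norm_diff_le_of_directional_derivative_le[OF S, of g "\<lambda>w. frechet_derivative g (at w)"])
  fix w assume w: "w \<in> S"
  show "(g has_derivative frechet_derivative g (at w)) (at w)"
    using diff[OF w] frechet_derivative_works by blast
  show "norm (frechet_derivative g (at w) (z - y)) \<le> 2 * M * norm (z - y)"
    unfolding frechet_derivative_eq_pd[OF diff[OF w]]
    by (rule norm_cart2_combination_le[OF bound[OF w]])
qed

lemma norm_diff_axis_le_of_pd_bound:
  fixes g :: "R2 \<Rightarrow> R2"
  assumes S: "convex S" "y \<in> S" "y + h *\<^sub>R axis i 1 \<in> S"
    and diff: "\<And>w. w \<in> S \<Longrightarrow> g differentiable (at w)"
    and bound: "\<And>w. w \<in> S \<Longrightarrow> norm (pd i g w) \<le> M"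
  shows "norm (g (y + h *\<^sub>R axis i 1) - g y) \<le> \<bar>h\<bar> * M"
proof (rule norm_diff_le_of_directional_derivative_le[OF S, of g "\<lambda>w. frechet_derivative g (at w)"])
  fix w assume w: "w \<in> S"
  show "(g has_derivative frechet_derivative g (at w)) (at w)"
    using diff[OF w] frechet_derivative_works by blast
  show "norm (frechet_derivative g (at w) (y + h *\<^sub>R axis i 1 - y)) \<le> \<bar>h\<bar> * M"
    using frechet_derivative_axis[OF diff[OF w]] bound[OF w] by (simp add: mult_left_mono)
qed

lemma pd_difference_quotient:
  assumes "f differentiable (at z)" "0 < e"
  obtains d where "0 < d"
    "\<And>h. h \<noteq> 0 \<Longrightarrow> \<bar>h\<bar> < d \<Longrightarrow> norm (f (z + h *\<^sub>R axis i 1) - f z - h *\<^sub>R pd i f z) \<le> e * \<bar>h\<bar>"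
proof -
  have "(f has_derivative frechet_derivative f (at z)) (at z)"
    using assms(1) frechet_derivative_works by blast
  then have "(\<lambda>v. norm (f (z + v) - f z - frechet_derivative f (at z) v) / norm v) \<midarrow>0\<rightarrow> 0"
    unfolding has_derivative_at by blast
  then obtain d where d: "0 < d" and small: "\<And>v. v \<noteq> 0 \<Longrightarrow> dist v 0 < d \<Longrightarrow>
      dist (norm (f (z + v) - f z - frechet_derivative f (at z) v) / norm v) 0 < e"
    using assms(2) unfolding tendsto_iff eventually_at by blast
  have "norm (f (z + h *\<^sub>R axis i 1) - f z - h *\<^sub>R pd i f z) \<le> e * \<bar>h\<bar>"
    if h: "h \<noteq> 0" "\<bar>h\<bar> < d" for h
  proof -
    have "h *\<^sub>R axis i (1::real) \<noteq> 0"
      using h(1) by (metis norm_axis_1 norm_scaleR mult_cancel_left1 norm_zero abs_eq_0)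
    from small[OF this] h
    have "norm (f (z + h *\<^sub>R axis i 1) - f z - h *\<^sub>R pd i f z) / \<bar>h\<bar> < e"
      by (simp add: frechet_derivative_axis[OF assms(1)])
    then show ?thesis
      using h by (simp add: divide_less_eq mult.commute)
  qed
  with d that show ?thesis
    by blast
qed

lemma norm_increment_diff_le:
  fixes f :: "R2 \<Rightarrow> R2"
  assumes diff: "\<And>w. f differentiable (at w)" "\<And>w j. pd j f differentiable (at w)"
    and bound: "\<And>w j. w \<in> ball x 1 \<Longrightarrow> norm (pd i (pd j f) w) \<le> N"
    and yz: "y \<in> ball x (1/2)" "z \<in> ball x (1/2)"
    and h: "0 < h" "h < 1/2"
  shows "norm ((f (z + h *\<^sub>R axis i 1) - f z) - (f (y + h *\<^sub>R axis i 1) - f y))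
           \<le> 2 * N * h * norm (z - y)"
proof -
  define c where "c = h *\<^sub>R axis i (1::real)"
  have c_in: "w + c \<in> ball x 1" if "w \<in> ball x (1/2)" for w
  proof -
    have "dist x (w + c) \<le> dist x w + norm c"
      using dist_triangle[of x "w + c" w] by (simp add: dist_norm)
    then show ?thesis
      using that h unfolding c_def by simp
  qed
  have "norm ((f (z + c) - f z) - (f (y + c) - f y)) \<le> 2 * (h * N) * norm (z - y)"
  proof (rule norm_diff_le_of_directional_derivative_le[of "ball x (1/2)" y z "\<lambda>w. f (w + c) - f w"
        "\<lambda>w v. frechet_derivative f (at (w + c)) v - frechet_derivative f (at w) v"])
    fix w assume w: "w \<in> ball x (1/2)"
    have "((\<lambda>w. w + c) has_derivative (\<lambda>v. v)) (at w)"
      by (auto intro!: derivative_eq_intros)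
    from has_derivative_compose[OF this diff(1)[unfolded frechet_derivative_works]]
    have "((\<lambda>w. f (w + c)) has_derivative frechet_derivative f (at (w + c))) (at w)" .
    then show "((\<lambda>w. f (w + c) - f w) has_derivative
        (\<lambda>v. frechet_derivative f (at (w + c)) v - frechet_derivative f (at w) v)) (at w)"
      by (rule has_derivative_diff[OF _ diff(1)[unfolded frechet_derivative_works]])
    have "norm (pd j f (w + c) - pd j f w) \<le> h * N" for j
      using norm_diff_axis_le_of_pd_bound[of "ball x 1" w h i "pd j f" N] c_in[OF w] w diff(2)
        bound h(1) unfolding c_def by auto
    then have "norm ((z - y)$1 *\<^sub>R (pd 1 f (w + c) - pd 1 f w)
        + (z - y)$2 *\<^sub>R (pd 2 f (w + c) - pd 2 f w)) \<le> 2 * (h * N) * norm (z - y)"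
      by (intro norm_cart2_combination_le)
    then show "norm (frechet_derivative f (at (w + c)) (z - y) - frechet_derivative f (at w) (z - y))
        \<le> 2 * (h * N) * norm (z - y)"
      unfolding frechet_derivative_eq_pd[OF diff(1)] by (simp add: algebra_simps)
  qed (use yz in auto)
  then show ?thesis
    unfolding c_def by (simp add: algebra_simps)
qed

(* Only the derivatives of pd 1 f and pd 2 f in direction i are controlled, so instead of
   differentiating pd i f one compares the increments f (w + h e_i) - f w, whose derivatives
   in w involve exactly these. *)

lemma norm_pd_diff_le:
  fixes f :: "R2 \<Rightarrow> R2"
  assumes diff: "\<And>w. f differentiable (at w)" "\<And>w j. pd j f differentiable (at w)"
    and bound: "\<And>w j. w \<in> ball x 1 \<Longrightarrow> norm (pd i (pd j f) w) \<le> N"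
    and yz: "y \<in> ball x (1/2)" "z \<in> ball x (1/2)"
  shows "norm (pd i f z - pd i f y) \<le> 2 * N * norm (z - y)"
proof (rule field_le_epsilon)
  fix e :: real assume e: "0 < e"
  obtain dz where dz: "0 < dz" "\<And>h. h \<noteq> 0 \<Longrightarrow> \<bar>h\<bar> < dz \<Longrightarrow>
      norm (f (z + h *\<^sub>R axis i 1) - f z - h *\<^sub>R pd i f z) \<le> e/2 * \<bar>h\<bar>"
    using pd_difference_quotient[OF diff(1), of "e/2"] e by auto
  obtain dy where dy: "0 < dy" "\<And>h. h \<noteq> 0 \<Longrightarrow> \<bar>h\<bar> < dy \<Longrightarrow>
      norm (f (y + h *\<^sub>R axis i 1) - f y - h *\<^sub>R pd i f y) \<le> e/2 * \<bar>h\<bar>"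
    using pd_difference_quotient[OF diff(1), of "e/2"] e by auto
  define h where "h = min (min dz dy) (1/2) / 2"
  have h: "0 < h" "h < dz" "h < dy" "h < 1/2"
    unfolding h_def using dz dy by auto
  define c where "c = h *\<^sub>R axis i (1::real)"
  define G where "G = (f (z + c) - f z) - (f (y + c) - f y)"
  define Rz where "Rz = f (z + c) - f z - h *\<^sub>R pd i f z"
  define Ry where "Ry = f (y + c) - f y - h *\<^sub>R pd i f y"
  have "G - Rz + Ry = h *\<^sub>R (pd i f z - pd i f y)"
    unfolding G_def Rz_def Ry_def by (simp add: algebra_simps)
  then have "h * norm (pd i f z - pd i f y) = norm (G - Rz + Ry)"
    using h(1) by simp
  also have "\<dots> \<le> norm (G - Rz) + norm Ry"
    by (rule norm_triangle_ineq)
  also have "\<dots> \<le> norm G + norm Rz + norm Ry"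
    using norm_triangle_ineq4[of G Rz] by simp
  also have "\<dots> \<le> 2 * N * h * norm (z - y) + e/2 * h + e/2 * h"
    using norm_increment_diff_le[OF diff bound yz h(1,4)] dz(2)[of h] dy(2)[of h] h
    unfolding G_def Rz_def Ry_def c_def by (intro add_mono) auto
  finally have "h * norm (pd i f z - pd i f y) \<le> h * (2 * N * norm (z - y) + e)"
    by (simp add: algebra_simps)
  then show "norm (pd i f z - pd i f y) \<le> 2 * N * norm (z - y) + e"
    using h(1) by simp
qed

lemma C3_differentiable:
  assumes "C3 f"
  shows "f differentiable (at y)" "pd i f differentiable (at y)"
  using assms[unfolded C3_def] by (metis dlist.simps length_Cons list.size(3) numeral_3_eq_3
      less_Suc_eq zero_less_Suc)+

lemma dalpha_simps:
  "dalpha (0,0) f = f" "dalpha (1,0) f = pd 1 f" "dalpha (0,1) f = pd 2 f"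
  "dalpha (2,0) f = pd 1 (pd 1 f)" "dalpha (1,1) f = pd 1 (pd 2 f)" "dalpha (0,2) f = pd 2 (pd 2 f)"
  by (simp_all add: dalpha_def numeral_2_eq_2)

lemma norm_dalpha_le_nfun:
  assumes "fst \<alpha> + snd \<alpha> \<le> 3"
  shows "norm (dalpha \<alpha> b y) + norm (dalpha \<alpha> \<sigma> y) \<le> nfun \<sigma> b y"
proof -
  define T where "T k = (\<Sum>\<alpha>\<in>{\<alpha>::nat\<times>nat. fst \<alpha> + snd \<alpha> = k}.
                    norm (dalpha \<alpha> b y) + norm (dalpha \<alpha> \<sigma> y))" for k
  have "finite {\<alpha>::nat\<times>nat. fst \<alpha> + snd \<alpha> = k}" for k
    by (rule finite_subset[of _ "{..k} \<times> {..k}"]) auto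
  then have "norm (dalpha \<alpha> b y) + norm (dalpha \<alpha> \<sigma> y) \<le> T (fst \<alpha> + snd \<alpha>)"
    unfolding T_def by (intro member_le_sum) auto
  also have "\<dots> \<le> (\<Sum>k\<le>3. T k)"
    using assms by (intro member_le_sum) (auto simp: T_def intro!: sum_nonneg)
  finally show ?thesis
    unfolding nfun_def T_def .
qed

lemma lie_eq: "lie g f w = g w$1 *\<^sub>R pd 1 f w + g w$2 *\<^sub>R pd 2 f w"
  by (simp add: lie_def sum_2)

lemma norm_lie_le:
  assumes "norm (g w) \<le> N" "norm (pd 1 f w) \<le> N" "norm (pd 2 f w) \<le> N"
  shows "norm (lie g f w) \<le> 2 * N^2"
proof -
  have "norm (lie g f w) \<le> \<bar>g w$1\<bar> * norm (pd 1 f w) + \<bar>g w$2\<bar> * norm (pd 2 f w)"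
    unfolding lie_eq by (metis norm_scaleR norm_triangle_ineq)
  also have "\<dots> \<le> N * N + N * N"
    by (intro add_mono mult_mono order_trans[OF component_le_norm_cart assms(1)] assms(2,3))
       (auto intro: order_trans[OF norm_ge_zero assms(1)])
  finally show ?thesis
    by (simp add: power2_eq_square)
qed

lemma norm_lie_diff_le:
  assumes "norm (g z - g y) \<le> A" "norm (pd 1 f z - pd 1 f y) \<le> A" "norm (pd 2 f z - pd 2 f y) \<le> A"
    and "norm (g y) \<le> N" "norm (pd 1 f z) \<le> N" "norm (pd 2 f z) \<le> N"
  shows "norm (lie g f z - lie g f y) \<le> 4 * N * A"
proof -
  have A: "0 \<le> A" and N: "0 \<le> N"
    using assms(1,4) norm_ge_zero order_trans by blast+
  have term_le: "norm (u$i *\<^sub>R p + v$i *\<^sub>R q) \<le> 2 * N * A"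
    if "norm u \<le> A" "norm p \<le> N" "norm v \<le> N" "norm q \<le> A" for u v p q :: R2 and i
  proof -
    have "norm (u$i *\<^sub>R p + v$i *\<^sub>R q) \<le> \<bar>u$i\<bar> * norm p + \<bar>v$i\<bar> * norm q"
      by (metis norm_scaleR norm_triangle_ineq)
    also have "\<dots> \<le> A * N + N * A"
      by (intro add_mono mult_mono order_trans[OF component_le_norm_cart] that) (auto simp: N A)
    finally show ?thesis
      by (simp add: mult_ac)
  qed
  have "lie g f z - lie g f y = ((g z - g y)$1 *\<^sub>R pd 1 f z + g y$1 *\<^sub>R (pd 1 f z - pd 1 f y))
      + ((g z - g y)$2 *\<^sub>R pd 2 f z + g y$2 *\<^sub>R (pd 2 f z - pd 2 f y))"
    unfolding lie_eq by (simp add: algebra_simps)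
  also have "norm \<dots> \<le> 2 * N * A + 2 * N * A"
    by (rule order_trans[OF norm_triangle_ineq add_mono]) (rule term_le; fact assms)+
  finally show ?thesis
    by (simp add: mult_ac)
qed

lemma Adelta_eq_dilated_frame:
  "0 < \<delta> \<Longrightarrow> Adelta \<sigma> b \<delta> y = dilated_frame \<delta> (\<sigma> y) (bracket b \<sigma> y)"
  unfolding Adelta_def dilated_frame_def
  using powr_add[of \<delta> 1 "1/2"] by (simp add: powr_half_sqrt)

lemma Abar_eq_dilated_frame:
  "0 < \<delta> \<Longrightarrow> Abar \<sigma> b \<delta> x = dilated_frame \<delta> (\<sigma> x + \<delta> *\<^sub>R lie b \<sigma> x) (bracket b \<sigma> x)"
  unfolding Abar_def dilated_frame_def
  using powr_add[of \<delta> 1 "1/2"] by (simp add: powr_half_sqrt)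

locale hoermander_near =
  fixes \<sigma> b :: "R2 \<Rightarrow> R2" and x :: R2 and N \<Lambda> :: real
  assumes C3: "C3 \<sigma>" "C3 b"
    and NL: "1 \<le> N" "0 < \<Lambda>" "\<Lambda> \<le> 1"
    and bounds: "\<And>y. y \<in> ball x 1 \<Longrightarrow> \<Lambda> \<le> lam \<sigma> b y \<and> nfun \<sigma> b y \<le> N"
begin

lemma norm_dalpha_le:
  assumes "y \<in> ball x 1" "fst \<alpha> + snd \<alpha> \<le> 3"
  shows "norm (dalpha \<alpha> \<sigma> y) \<le> N" "norm (dalpha \<alpha> b y) \<le> N"
  using norm_dalpha_le_nfun[OF assms(2), of b y \<sigma>] bounds[OF assms(1)]
    norm_ge_zero[of "dalpha \<alpha> \<sigma> y"] norm_ge_zero[of "dalpha \<alpha> b y"] by linarith+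

lemma derivative_bounds:
  assumes "y \<in> ball x 1"
  shows "norm (\<sigma> y) \<le> N" "norm (pd i \<sigma> y) \<le> N"
    "norm (pd 1 (pd j \<sigma>) y) \<le> N" "norm (pd 2 (pd 2 \<sigma>) y) \<le> N"
    and "norm (b y) \<le> N" "norm (pd i b y) \<le> N"
    "norm (pd 1 (pd j b) y) \<le> N" "norm (pd 2 (pd 2 b) y) \<le> N"
proof -
  have "i = 1 \<or> i = 2" "j = 1 \<or> j = 2"
    using exhaust_2 by blast+
  then show "norm (\<sigma> y) \<le> N" "norm (pd i \<sigma> y) \<le> N"
    "norm (pd 1 (pd j \<sigma>) y) \<le> N" "norm (pd 2 (pd 2 \<sigma>) y) \<le> N"
    and "norm (b y) \<le> N" "norm (pd i b y) \<le> N"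
    "norm (pd 1 (pd j b) y) \<le> N" "norm (pd 2 (pd 2 b) y) \<le> N"
    using norm_dalpha_le[OF assms, of "(0,0)"] norm_dalpha_le[OF assms, of "(1,0)"]
      norm_dalpha_le[OF assms, of "(0,1)"] norm_dalpha_le[OF assms, of "(2,0)"]
      norm_dalpha_le[OF assms, of "(1,1)"] norm_dalpha_le[OF assms, of "(0,2)"]
    unfolding dalpha_simps by auto
qed

lemma norm_lie_le_on_ball:
  assumes "y \<in> ball x 1"
  shows "norm (lie \<sigma> b y) \<le> 2 * N^2" "norm (lie b \<sigma> y) \<le> 2 * N^2"
  using norm_lie_le derivative_bounds[OF assms] by auto

lemma norm_bracket_le:
  assumes "y \<in> ball x 1"
  shows "norm (bracket b \<sigma> y) \<le> 4 * N^2"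
  using norm_triangle_ineq4[of "lie \<sigma> b y" "lie b \<sigma> y"] norm_lie_le_on_ball[OF assms]
  unfolding bracket_def by linarith

lemma abs_det_frame_ge:
  assumes "y \<in> ball x 1"
  shows "\<Lambda> \<le> \<bar>det2 (\<sigma> y) (bracket b \<sigma> y)\<bar>"
  using le_abs_det_of_le_min_eigenvalue[of \<Lambda> "Amat \<sigma> b y"] bounds[OF assms] NL
  unfolding lam_def Amat_def det_cols2 by simp

lemma sigma_bracket_lipschitz:
  assumes "y \<in> ball x (1/2)" "z \<in> ball x (1/2)"
  shows "norm (\<sigma> z - \<sigma> y) \<le> 2 * N * norm (z - y)"
    and "norm (bracket b \<sigma> z - bracket b \<sigma> y) \<le> 16 * N^2 * norm (z - y)"
proof -
  define A where "A = 2 * N * norm (z - y)"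
  have yz: "y \<in> ball x 1" "z \<in> ball x 1"
    using assms by auto
  have lip: "norm (f z - f y) \<le> A"
    if "f \<in> {\<sigma>, b, pd 2 \<sigma>, pd 2 b}" for f
    unfolding A_def
    by (rule norm_diff_le_of_pd_bound[OF convex_ball yz])
       (use that C3_differentiable[OF C3(1)] C3_differentiable[OF C3(2)] derivative_bounds in auto)
  have lip1: "norm (pd 1 f z - pd 1 f y) \<le> A" if "f \<in> {\<sigma>, b}" for f
    unfolding A_def
    by (rule norm_pd_diff_le[OF _ _ _ assms(1,2)])
       (use that C3_differentiable[OF C3(1)] C3_differentiable[OF C3(2)] derivative_bounds in auto)
  show "norm (\<sigma> z - \<sigma> y) \<le> 2 * N * norm (z - y)"
    using lip[of \<sigma>] unfolding A_def by simp
  have "norm (lie \<sigma> b z - lie \<sigma> b y) \<le> 4 * N * A" "norm (lie b \<sigma> z - lie b \<sigma> y) \<le> 4 * N * A"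
    using lip lip1 derivative_bounds yz by (auto intro!: norm_lie_diff_le)
  then show "norm (bracket b \<sigma> z - bracket b \<sigma> y) \<le> 16 * N^2 * norm (z - y)"
    using norm_triangle_ineq4[of "lie \<sigma> b z - lie \<sigma> b y" "lie b \<sigma> z - lie b \<sigma> y"]
    unfolding bracket_def A_def by (simp add: power2_eq_square algebra_simps)
qed

lemma delta_small:
  assumes "0 < \<delta>" "\<delta> \<le> \<Lambda> / (512 * N^5)"
  shows "\<delta> * N \<le> 1/512" "\<delta> \<le> 1"
proof -
  have "\<delta> * N \<le> \<Lambda> / (512 * N^5) * N"
    using assms NL by (intro mult_right_mono) auto
  also have "\<dots> = \<Lambda> / (512 * N^4)"
    using NL by (simp add: field_simps eval_nat_numeral)
  also have "\<dots> \<le> 1 / 512"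
  proof -
    have "\<Lambda> \<le> N^4"
      using NL one_le_power[of N 4] by linarith
    then show ?thesis
      using NL by (simp add: divide_le_eq)
  qed
  finally show "\<delta> * N \<le> 1/512" .
  then show "\<delta> \<le> 1"
    using assms(1) NL mult_left_mono[of 1 N \<delta>] by linarith
qed

lemma N_power_bounds: "N \<le> 4 * N^2" "2 * N^2 \<le> 16 * N^3" "N + 2 * N^2 \<le> 4 * N^2"
proof -
  have "N \<le> N^2" "N^2 \<le> N^3"
    using mult_right_mono[of 1 N N] mult_right_mono[of 1 N "N^2"] NL
    by (simp_all add: power2_eq_square power3_eq_cube mult_ac)
  then show "N \<le> 4 * N^2" "2 * N^2 \<le> 16 * N^3" "N + 2 * N^2 \<le> 4 * N^2"
    using NL by simp_all
qed

lemma Abar_frame_comparable: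
  assumes \<delta>: "0 < \<delta>" "\<delta> \<le> \<Lambda> / (512 * N^5)"
  defines "s' \<equiv> \<sigma> x + \<delta> *\<^sub>R lie b \<sigma> x"
  shows "mnorm (dilated_frame \<delta> (\<sigma> x) (bracket b \<sigma> x)) \<xi>
           \<le> 448 * (N/\<Lambda>)^5 * mnorm (dilated_frame \<delta> s' (bracket b \<sigma> x)) \<xi>"
    and "mnorm (dilated_frame \<delta> s' (bracket b \<sigma> x)) \<xi>
           \<le> 448 * (N/\<Lambda>)^5 * mnorm (dilated_frame \<delta> (\<sigma> x) (bracket b \<sigma> x)) \<xi>"
proof -
  have x: "x \<in> ball x 1"
    by simp
  have lie: "norm (lie b \<sigma> x) \<le> 2 * N^2"
    using norm_lie_le_on_ball[OF x] by simp
  have "norm (s' - \<sigma> x) = \<delta> * norm (lie b \<sigma> x)"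
    using \<delta>(1) unfolding s'_def by simp
  also have "\<dots> \<le> 16 * N^3 * \<delta>"
    using lie N_power_bounds(2) \<delta>(1) by (simp add: mult.commute mult_left_mono)
  finally have close: "norm (s' - \<sigma> x) \<le> 16 * N^3 * \<delta>" .
  have "norm s' \<le> norm (\<sigma> x) + \<delta> * norm (lie b \<sigma> x)"
    using norm_triangle_ineq[of "\<sigma> x" "\<delta> *\<^sub>R lie b \<sigma> x"] \<delta>(1) unfolding s'_def by simp
  also have "\<dots> \<le> N + 1 * (2 * N^2)"
    using derivative_bounds(1)[OF x] lie delta_small[OF \<delta>] \<delta>(1)
    by (intro add_mono mult_mono) auto
  finally have "norm s' \<le> 4 * N^2"
    using N_power_bounds(3) by linarith
  note comparable = mnorm_dilated_frame_comparable[OF NL abs_det_frame_ge[OF x]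
      order_trans[OF derivative_bounds(1)[OF x] N_power_bounds(1)] norm_bracket_le[OF x]
      this norm_bracket_le[OF x] close _ \<delta>, of \<xi>]
  show "mnorm (dilated_frame \<delta> (\<sigma> x) (bracket b \<sigma> x)) \<xi>
           \<le> 448 * (N/\<Lambda>)^5 * mnorm (dilated_frame \<delta> s' (bracket b \<sigma> x)) \<xi>"
    "mnorm (dilated_frame \<delta> s' (bracket b \<sigma> x)) \<xi>
           \<le> 448 * (N/\<Lambda>)^5 * mnorm (dilated_frame \<delta> (\<sigma> x) (bracket b \<sigma> x)) \<xi>"
    using comparable NL \<delta> by simp_all
qed

lemma shifted_frame_comparable:
  assumes \<delta>: "0 < \<delta>" "\<delta> \<le> \<Lambda> / (512 * N^5)"
  defines "x' \<equiv> x + \<delta> *\<^sub>R b x"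
  shows "mnorm (dilated_frame \<delta> (\<sigma> x) (bracket b \<sigma> x)) \<xi>
           \<le> 448 * (N/\<Lambda>)^5 * mnorm (dilated_frame \<delta> (\<sigma> x') (bracket b \<sigma> x')) \<xi>"
    and "mnorm (dilated_frame \<delta> (\<sigma> x') (bracket b \<sigma> x')) \<xi>
           \<le> 448 * (N/\<Lambda>)^5 * mnorm (dilated_frame \<delta> (\<sigma> x) (bracket b \<sigma> x)) \<xi>"
proof -
  have x: "x \<in> ball x 1" "x \<in> ball x (1/2)"
    by simp_all
  have step: "norm (x' - x) \<le> \<delta> * N"
    using derivative_bounds(5)[OF x(1)] \<delta>(1) unfolding x'_def by (simp add: mult_left_mono)
  then have x': "x' \<in> ball x (1/2)" "x' \<in> ball x 1"
    using delta_small[OF \<delta>] by (auto simp: dist_norm norm_minus_commute)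
  have "norm (\<sigma> x' - \<sigma> x) \<le> 2 * N * (\<delta> * N)"
    using sigma_bracket_lipschitz(1)[OF x(2) x'(1)] step NL by (smt (verit) mult_left_mono)
  also have "\<dots> \<le> 16 * N^3 * \<delta>"
    using N_power_bounds(2) \<delta>(1) by (simp add: power2_eq_square algebra_simps mult_right_mono)
  finally have close_\<sigma>: "norm (\<sigma> x' - \<sigma> x) \<le> 16 * N^3 * \<delta>" .
  have "norm (bracket b \<sigma> x' - bracket b \<sigma> x) \<le> 16 * N^2 * (\<delta> * N)"
    using sigma_bracket_lipschitz(2)[OF x(2) x'(1)] step NL by (smt (verit) mult_left_mono zero_le_power2)
  then have close_bracket: "norm (bracket b \<sigma> x' - bracket b \<sigma> x) \<le> 16 * N^3 * \<delta>"
    by (simp add: power2_eq_square power3_eq_cube algebra_simps)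
  note comparable = mnorm_dilated_frame_comparable[OF NL abs_det_frame_ge[OF x(1)]
      order_trans[OF derivative_bounds(1)[OF x(1)] N_power_bounds(1)] norm_bracket_le[OF x(1)]
      order_trans[OF derivative_bounds(1)[OF x'(2)] N_power_bounds(1)] norm_bracket_le[OF x'(2)]
      close_\<sigma> close_bracket \<delta>, of \<xi>]
  show "mnorm (dilated_frame \<delta> (\<sigma> x) (bracket b \<sigma> x)) \<xi>
           \<le> 448 * (N/\<Lambda>)^5 * mnorm (dilated_frame \<delta> (\<sigma> x') (bracket b \<sigma> x')) \<xi>"
    "mnorm (dilated_frame \<delta> (\<sigma> x') (bracket b \<sigma> x')) \<xi>
           \<le> 448 * (N/\<Lambda>)^5 * mnorm (dilated_frame \<delta> (\<sigma> x) (bracket b \<sigma> x)) \<xi>"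
    using comparable by simp_all
qed

lemma delta_le_of_powr_bound:
  assumes "\<delta> \<le> 1 / (512 * (N / \<Lambda>) powr 5)"
  shows "\<delta> \<le> \<Lambda> / (512 * N^5)"
proof -
  have "1 / (512 * (N / \<Lambda>) powr 5) = \<Lambda>^5 / (512 * N^5)"
    using NL by (simp add: powr_realpow power_divide)
  also have "\<dots> \<le> \<Lambda> / (512 * N^5)"
    using NL power_decreasing[of 1 5 \<Lambda>] by (intro divide_right_mono) auto
  finally show ?thesis
    using assms by linarith
qed

end

lemma frames_comparable:
  assumes "hoermander_near \<sigma> b x N \<Lambda>" "0 < \<delta>" "\<delta> \<le> 1 / (512 * (N / \<Lambda>) powr 5)"
  defines "C \<equiv> 448 * (N / \<Lambda>) powr 5"
  shows "mnorm (Adelta \<sigma> b \<delta> x) \<xi> / C \<le> mnorm (Abar \<sigma> b \<delta> x) \<xi>"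
    and "mnorm (Abar \<sigma> b \<delta> x) \<xi> \<le> C * mnorm (Adelta \<sigma> b \<delta> x) \<xi>"
    and "mnorm (Adelta \<sigma> b \<delta> x) \<xi> / C \<le> mnorm (Adelta \<sigma> b \<delta> (x + \<delta> *\<^sub>R b x)) \<xi>"
    and "mnorm (Adelta \<sigma> b \<delta> (x + \<delta> *\<^sub>R b x)) \<xi> \<le> C * mnorm (Adelta \<sigma> b \<delta> x) \<xi>"
proof -
  interpret hoermander_near \<sigma> b x N \<Lambda>
    by (fact assms(1))
  have \<delta>: "0 < \<delta>" "\<delta> \<le> \<Lambda> / (512 * N^5)"
    using assms(2) delta_le_of_powr_bound[OF assms(3)] by simp_all
  have C: "0 < C" "C = 448 * (N / \<Lambda>)^5"
    using NL unfolding C_def by (simp_all add: powr_realpow)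
  show "mnorm (Adelta \<sigma> b \<delta> x) \<xi> / C \<le> mnorm (Abar \<sigma> b \<delta> x) \<xi>"
    "mnorm (Abar \<sigma> b \<delta> x) \<xi> \<le> C * mnorm (Adelta \<sigma> b \<delta> x) \<xi>"
    "mnorm (Adelta \<sigma> b \<delta> x) \<xi> / C \<le> mnorm (Adelta \<sigma> b \<delta> (x + \<delta> *\<^sub>R b x)) \<xi>"
    "mnorm (Adelta \<sigma> b \<delta> (x + \<delta> *\<^sub>R b x)) \<xi> \<le> C * mnorm (Adelta \<sigma> b \<delta> x) \<xi>"
    using Abar_frame_comparable[OF \<delta>, of \<xi>] shifted_frame_comparable[OF \<delta>, of \<xi>] C
    unfolding Adelta_eq_dilated_frame[OF \<delta>(1)] Abar_eq_dilated_frame[OF \<delta>(1)]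
    by (simp_all add: pos_divide_le_eq mult.commute)
qed

theorem lemmaA3:
  shows "\<exists>K1 q1 K2 q2 :: real. K1 \<ge> 1 \<and> q1 \<ge> 1 \<and> K2 \<ge> 1 \<and> q2 \<ge> 1 \<and>
    (\<forall>(\<sigma>::R2 \<Rightarrow> R2) (b::R2 \<Rightarrow> R2) (x::R2) (N::real) (\<Lambda>::real) (\<kappa>::R2 \<Rightarrow> real).
       C3 \<sigma> \<and> C3 b \<and> 0 < \<Lambda> \<and> \<Lambda> \<le> 1 \<and> 1 \<le> N \<and>
       (\<forall>y \<in> ball x 1. \<Lambda> \<le> lam \<sigma> b y \<and> nfun \<sigma> b y \<le> N \<and>
          \<kappa> differentiable (at y) \<and> lie \<sigma> \<sigma> y = \<kappa> y *\<^sub>R \<sigma> y \<and>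
          \<bar>\<kappa> y\<bar> \<le> nfun \<sigma> b y \<and> norm (grad \<kappa> y) \<le> nfun \<sigma> b y)
     \<longrightarrow> (\<forall>\<delta>::real. 0 < \<delta> \<and> \<delta> \<le> 1 / (K2 * (N / \<Lambda>) powr q2) \<longrightarrow>
           (\<forall>\<xi>::R2.
              mnorm (Adelta \<sigma> b \<delta> x) \<xi> / (K1 * (N / \<Lambda>) powr q1) \<le> mnorm (Abar \<sigma> b \<delta> x) \<xi>
            \<and> mnorm (Abar \<sigma> b \<delta> x) \<xi> \<le> (K1 * (N / \<Lambda>) powr q1) * mnorm (Adelta \<sigma> b \<delta> x) \<xi>
            \<and> mnorm (Adelta \<sigma> b \<delta> x) \<xi> / (K1 * (N / \<Lambda>) powr q1) \<le> mnorm (Adelta \<sigma> b \<delta> (x + \<delta> *\<^sub>R b x)) \<xi>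
            \<and> mnorm (Adelta \<sigma> b \<delta> (x + \<delta> *\<^sub>R b x)) \<xi> \<le> (K1 * (N / \<Lambda>) powr q1) * mnorm (Adelta \<sigma> b \<delta> x) \<xi>)))"
  by (rule exI[of _ 448], rule exI[of _ 5], rule exI[of _ 512], rule exI[of _ 5],
      intro conjI allI impI; (elim conjE)?)
     (simp, simp, simp, simp, (rule frames_comparable, rule hoermander_near.intro; auto)+)

end
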